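(* Let $(\mathcal{S},\mathcal{A},r,C,P,\mu,D)$ be a finite constrained Markov decision process with discount factor $\gamma\in[0,1)$, and let $P_m(s'|s,a)$ be a second (model) transition probability on the same finite state and action spaces. Let $\pi(a|s)$ and $\pi'(a|s)$ be arbitrary stochastic policies, and let $\Delta J(\pi,\pi') = J(\pi')-J(\pi)$ be the difference of their expected discounted returns under the true dynamics $P$. Then $$\frac{L^{\pi}_m(\pi')}{1-\gamma} - \frac{4\delta^{\max}\epsilon}{1-\gamma} \;\le\; \Delta J(\pi,\pi') \;\le\; \frac{L^{\pi}_m(\pi')}{1-\gamma} + \frac{4\delta^{\max}\epsilon}{1-\gamma},$$ where $$L^{\pi}_m(\pi') = \mathbb{E}_{s\sim d^{\pi}_m,\, a\sim\pi}\Big[\frac{\pi'(a|s)}{\pi(a|s)}A^{\pi}_m(s,a)\Big],\qquad \delta^{\max} = \max_{s,a,s'}\big|r(s,a,s')+\gamma V^{\pi}_m(s')-V^{\pi}_m(s)\big|,$$ $$\epsilon = \epsilon_\pi\epsilon_m + \frac{\gamma}{1-\gamma}\big(\epsilon_\pi^2 + 2\epsilon_\pi\epsilon_m\big),\quad \epsilon_\pi = \max_s D_{TV}\big(\pi'(\cdot|s)\,\|\,\pi(\cdot|s)\big),\quad \epsilon_m = \max_{s,a} D_{TV}\big(P(\cdot|s,a)\,\|\,P_m(\cdot|s,a)\big).$$ The same two-sided bound holds for the expected discounted cost returns of any cost function $c_i$, with $r$ replaced by $c_i$ throughout (i.e. $J$, $V^\pi_m$, $A^\pi_m$ replaced by $J_{c_i}$,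 $V^\pi_{m,c_i}$, $A^\pi_{m,c_i}$).
   Context: A finite CMDP $(\mathcal{S},\mathcal{A},r,C,P,\mu,D)$ has finite state space $\mathcal{S}$, finite action space $\mathcal{A}$, reward $r:\mathcal{S}\times\mathcal{A}\times\mathcal{S}\to\mathbb{R}$, a set $C$ of cost functions $c_i:\mathcal{S}\times\mathcal{A}\times\mathcal{S}\to\mathbb{R}$, transition probability $P(s'|s,a)$, start-state distribution $\mu$, and cost limits $D$. The start distribution $\mu$ is the same under $P$ and under the model $P_m$. For a policy $\pi$, $J(\pi)=\mathbb{E}_{\tau\sim(\pi,P)}[\sum_{t\ge0}\gamma^t r(s_t,a_t,s_{t+1})]$ with $s_0\sim\mu$, $a_t\sim\pi(\cdot|s_t)$, $s_{t+1}\sim P(\cdot|s_t,a_t)$; $J_{c_i}$ is defined analogously with $c_i$. Under model dynamics: $V^\pi_m(s)=\mathbb{E}_{\tau\sim(\pi,P_m)}[\sum_t\gamma^t r(s_t,a_t,s_{t+1})\mid s_0=s]$, $Q^\pi_m(s,a)$ the same conditioned additionally on $a_0=a$, and $A^\pi_m(s,a)=Q^\pi_m(s,a)-V^\pi_m(s)$; cost counterparts $V^\pi_{m,c_i}$, $A^\pi_{m,c_i}$ are defined with $c_i$ in place of $r$. The discounted model state distribution is $d^\pi_m(s)=(1-\gamma)\sum_{t\ge0}\gamma^t\Pr(S_t=s\mid \pi,P_m)$. The total variation distance is $D_{TV}(p\|q)=\frac12\sum_x|p(x)-q(x)|$. The importance-weighted expectation in $L^\pi_m(\pi')$ is understood as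 $\mathbb{E}_{s\sim d^\pi_m}[\sum_a \pi'(a|s)A^\pi_m(s,a)]$. *)

theory Defs
  imports "HOL-Analysis.Analysis"
begin

(* Policy  \<pi> :: 's => 'a => real,  \<pi> s a = \<pi>(a|s).
   Kernel  P  :: 's => 'a => 's => real,  P s a s' = P(s'|s,a). *)

definition is_dist :: "('x::finite \<Rightarrow> real) \<Rightarrow> bool" where
  "is_dist p \<longleftrightarrow> (\<forall>x. 0 \<le> p x) \<and> (\<Sum>x\<in>UNIV. p x) = 1"

definition is_policy :: "('s::finite \<Rightarrow> 'a::finite \<Rightarrow> real) \<Rightarrow> bool" where
  "is_policy \<pi> \<longleftrightarrow> (\<forall>s. is_dist (\<pi> s))"

definition is_kernel :: "('s::finite \<Rightarrow> 'a::finite \<Rightarrow> 's \<Rightarrow> real) \<Rightarrow> bool" where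
  "is_kernel P \<longleftrightarrow> (\<forall>s a. is_dist (P s a))"

text \<open>Joint law of (S_t, A_t) of the chain driven by policy \<pi> and kernel P,
  started from the joint law nu of (S_0, A_0).\<close>
fun sa_dist :: "('s::finite \<Rightarrow> 'a::finite \<Rightarrow> 's \<Rightarrow> real) \<Rightarrow> ('s \<Rightarrow> 'a \<Rightarrow> real)
    \<Rightarrow> ('s \<Rightarrow> 'a \<Rightarrow> real) \<Rightarrow> nat \<Rightarrow> 's \<Rightarrow> 'a \<Rightarrow> real" where
  "sa_dist P \<pi> nu 0 = nu"
| "sa_dist P \<pi> nu (Suc t) = (\<lambda>s' a'.
     (\<Sum>s\<in>UNIV. \<Sum>a\<in>UNIV. sa_dist P \<pi> nu t s a * P s a s') * \<pi> s' a')"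

definition disc_return :: "real \<Rightarrow> ('s::finite \<Rightarrow> 'a::finite \<Rightarrow> 's \<Rightarrow> real)
    \<Rightarrow> ('s \<Rightarrow> 'a \<Rightarrow> 's \<Rightarrow> real) \<Rightarrow> ('s \<Rightarrow> 'a \<Rightarrow> real) \<Rightarrow> ('s \<Rightarrow> 'a \<Rightarrow> real) \<Rightarrow> real" where
  "disc_return \<gamma> r P \<pi> nu =
     (\<Sum>t. \<gamma> ^ t * (\<Sum>s\<in>UNIV. \<Sum>a\<in>UNIV. sa_dist P \<pi> nu t s a *
                       (\<Sum>s'\<in>UNIV. P s a s' * r s a s')))"

definition J :: "real \<Rightarrow> ('s::finite \<Rightarrow> 'a::finite \<Rightarrow> 's \<Rightarrow> real)
    \<Rightarrow> ('s \<Rightarrow> 'a \<Rightarrow> 's \<Rightarrow> real) \<Rightarrow> ('s \<Rightarrow> real) \<Rightarrow> ('s \<Rightarrow> 'a \<Rightarrow> real) \<Rightarrow> real" where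
  "J \<gamma> r P \<mu> \<pi> = disc_return \<gamma> r P \<pi> (\<lambda>s a. \<mu> s * \<pi> s a)"

definition Vf :: "real \<Rightarrow> ('s::finite \<Rightarrow> 'a::finite \<Rightarrow> 's \<Rightarrow> real)
    \<Rightarrow> ('s \<Rightarrow> 'a \<Rightarrow> 's \<Rightarrow> real) \<Rightarrow> ('s \<Rightarrow> 'a \<Rightarrow> real) \<Rightarrow> 's \<Rightarrow> real" where
  "Vf \<gamma> r P \<pi> s0 = disc_return \<gamma> r P \<pi> (\<lambda>s a. (if s = s0 then 1 else 0) * \<pi> s a)"

definition Qf :: "real \<Rightarrow> ('s::finite \<Rightarrow> 'a::finite \<Rightarrow> 's \<Rightarrow> real)
    \<Rightarrow> ('s \<Rightarrow> 'a \<Rightarrow> 's \<Rightarrow> real) \<Rightarrow> ('s \<Rightarrow> 'a \<Rightarrow> real) \<Rightarrow> 's \<Rightarrow> 'a \<Rightarrow> real" where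
  "Qf \<gamma> r P \<pi> s0 a0 = disc_return \<gamma> r P \<pi> (\<lambda>s a. if s = s0 \<and> a = a0 then 1 else 0)"

definition Af :: "real \<Rightarrow> ('s::finite \<Rightarrow> 'a::finite \<Rightarrow> 's \<Rightarrow> real)
    \<Rightarrow> ('s \<Rightarrow> 'a \<Rightarrow> 's \<Rightarrow> real) \<Rightarrow> ('s \<Rightarrow> 'a \<Rightarrow> real) \<Rightarrow> 's \<Rightarrow> 'a \<Rightarrow> real" where
  "Af \<gamma> r P \<pi> s a = Qf \<gamma> r P \<pi> s a - Vf \<gamma> r P \<pi> s"

definition dstate :: "real \<Rightarrow> ('s::finite \<Rightarrow> 'a::finite \<Rightarrow> 's \<Rightarrow> real)
    \<Rightarrow> ('s \<Rightarrow> real) \<Rightarrow> ('s \<Rightarrow> 'a \<Rightarrow> real) \<Rightarrow> 's \<Rightarrow> real" where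
  "dstate \<gamma> P \<mu> \<pi> s = (1 - \<gamma>) *
     (\<Sum>t. \<gamma> ^ t * (\<Sum>a\<in>UNIV. sa_dist P \<pi> (\<lambda>s a. \<mu> s * \<pi> s a) t s a))"

definition Lsur :: "real \<Rightarrow> ('s::finite \<Rightarrow> 'a::finite \<Rightarrow> 's \<Rightarrow> real)
    \<Rightarrow> ('s \<Rightarrow> 'a \<Rightarrow> 's \<Rightarrow> real) \<Rightarrow> ('s \<Rightarrow> real) \<Rightarrow> ('s \<Rightarrow> 'a \<Rightarrow> real) \<Rightarrow> ('s \<Rightarrow> 'a \<Rightarrow> real) \<Rightarrow> real" where
  "Lsur \<gamma> r Pm \<mu> \<pi> \<pi>' =
     (\<Sum>s\<in>UNIV. dstate \<gamma> Pm \<mu> \<pi> s * (\<Sum>a\<in>UNIV. \<pi>' s a * Af \<gamma> r Pm \<pi> s a))"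

definition dTV :: "('x::finite \<Rightarrow> real) \<Rightarrow> ('x \<Rightarrow> real) \<Rightarrow> real" where
  "dTV p q = (1/2) * (\<Sum>x\<in>UNIV. \<bar>p x - q x\<bar>)"

definition delta_max :: "real \<Rightarrow> ('s::finite \<Rightarrow> 'a::finite \<Rightarrow> 's \<Rightarrow> real)
    \<Rightarrow> ('s \<Rightarrow> 'a \<Rightarrow> 's \<Rightarrow> real) \<Rightarrow> ('s \<Rightarrow> 'a \<Rightarrow> real) \<Rightarrow> real" where
  "delta_max \<gamma> r Pm \<pi> = Max {\<bar>r s a s' + \<gamma> * Vf \<gamma> r Pm \<pi> s' - Vf \<gamma> r Pm \<pi> s\<bar> | s a s'. True}"

definition eps_pi :: "('s::finite \<Rightarrow> 'a::finite \<Rightarrow> real) \<Rightarrow> ('s \<Rightarrow> 'a \<Rightarrow> real) \<Rightarrow> real" where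
  "eps_pi \<pi> \<pi>' = Max {dTV (\<pi>' s) (\<pi> s) | s. True}"

definition eps_m :: "('s::finite \<Rightarrow> 'a::finite \<Rightarrow> 's \<Rightarrow> real) \<Rightarrow> ('s \<Rightarrow> 'a \<Rightarrow> 's \<Rightarrow> real) \<Rightarrow> real" where
  "eps_m P Pm = Max {dTV (P s a) (Pm s a) | s a. True}"

definition eps_total :: "real \<Rightarrow> real \<Rightarrow> real \<Rightarrow> real" where
  "eps_total \<gamma> ep em = ep * em + \<gamma> / (1 - \<gamma>) * (ep\<^sup>2 + 2 * ep * em)"

end

(*
  Let V be the model value function V^pi_m and delta(s,a,s') = f(s,a,s') + gamma V(s') - V(s)
  its TD error, so |delta| <= delta_max. Telescoping V along any chain gives
  J(rho) = E_mu V + sum_t gamma^t E[sum_a rho(a|S_t) E_P delta(S_t,a,.)], while the model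
  advantage is A(s,a) = E_{P_m} delta(s,a,.) and is centred: sum_a pi(a|s) A(s,a) = 0.
  Hence Delta J - L/(1-gamma) splits into three terms: the change of the discounted state
  distribution from (pi,P_m) to (pi',P) tested against sum_a pi' A = O(eps_pi delta_max);
  the discounted sum under (pi',P) of sum_a (pi' - pi)(E_P delta - E_{P_m} delta)
  = O(eps_pi eps_m delta_max); and the change from (pi,P) to (pi',P) tested against
  sum_a pi (E_P delta - E_{P_m} delta) = O(eps_m delta_max). Two chains whose transition rows
  differ by at most 2 eta in l1 have t-step state laws differing by at most 2 eta t, so a
  distribution change costs a factor gamma/(1-gamma)^2 instead of 1/(1-gamma).
*)

theory Submission
  imports Defs
begin

definition is_stochastic :: "('x \<Rightarrow> 'y::finite \<Rightarrow> real) \<Rightarrow> bool" where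
  "is_stochastic K \<longleftrightarrow> (\<forall>s. is_dist (K s))"

definition policy_kernel :: "('s::finite \<Rightarrow> 'a::finite \<Rightarrow> real) \<Rightarrow> ('s \<Rightarrow> 'a \<Rightarrow> 's \<Rightarrow> real)
    \<Rightarrow> 's \<Rightarrow> 's \<Rightarrow> real" where
  "policy_kernel \<rho> P s s' = (\<Sum>a\<in>UNIV. \<rho> s a * P s a s')"

fun state_dist :: "('s::finite \<Rightarrow> 's \<Rightarrow> real) \<Rightarrow> ('s \<Rightarrow> real) \<Rightarrow> nat \<Rightarrow> 's \<Rightarrow> real" where
  "state_dist K \<mu> 0 = \<mu>"
| "state_dist K \<mu> (Suc t) = (\<lambda>s'. \<Sum>s\<in>UNIV. state_dist K \<mu> t s * K s s')"

definition disc_sum :: "real \<Rightarrow> ('s::finite \<Rightarrow> 's \<Rightarrow> real) \<Rightarrow> ('s \<Rightarrow> real) \<Rightarrow> ('s \<Rightarrow> real) \<Rightarrow> real" where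
  "disc_sum \<gamma> K \<mu> u = (\<Sum>t. \<gamma> ^ t * (\<Sum>s\<in>UNIV. state_dist K \<mu> t s * u s))"

definition exp_reward :: "('s::finite \<Rightarrow> 'a::finite \<Rightarrow> real) \<Rightarrow> ('s \<Rightarrow> 'a \<Rightarrow> 's \<Rightarrow> real)
    \<Rightarrow> ('s \<Rightarrow> 'a \<Rightarrow> 's \<Rightarrow> real) \<Rightarrow> 's \<Rightarrow> real" where
  "exp_reward \<rho> P f s = (\<Sum>a\<in>UNIV. \<rho> s a * (\<Sum>s'\<in>UNIV. P s a s' * f s a s'))"

definition td_error :: "real \<Rightarrow> ('s \<Rightarrow> 'a \<Rightarrow> 's \<Rightarrow> real) \<Rightarrow> ('s \<Rightarrow> real) \<Rightarrow> 's \<Rightarrow> 'a \<Rightarrow> 's \<Rightarrow> real" where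
  "td_error \<gamma> f V s a s' = f s a s' + \<gamma> * V s' - V s"

lemma sum_sum_mult_swap:
  "(\<Sum>s'\<in>UNIV. \<Sum>s\<in>UNIV. (x s :: real) * K s s') = (\<Sum>s\<in>UNIV. x s * (\<Sum>s'\<in>UNIV. K s s'))"
  by (subst sum.swap) (simp add: sum_distrib_left)

lemma is_stochastic_policy_kernel:
  assumes "is_policy \<rho>" and "is_kernel P"
  shows "is_stochastic (policy_kernel \<rho> P)"
proof -
  have "(\<Sum>s'\<in>UNIV. policy_kernel \<rho> P s s') = (\<Sum>a\<in>UNIV. \<rho> s a * (\<Sum>s'\<in>UNIV. P s a s'))" for s
    unfolding policy_kernel_def by (subst sum.swap) (simp add: sum_distrib_left)
  moreover have "0 \<le> policy_kernel \<rho> P s s'" for s s'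
    using assms unfolding policy_kernel_def is_policy_def is_kernel_def is_dist_def
    by (auto intro!: sum_nonneg)
  ultimately show ?thesis
    using assms by (simp add: is_stochastic_def is_policy_def is_kernel_def is_dist_def)
qed

lemma is_dist_state_dist:
  assumes "is_stochastic K" and "is_dist \<mu>"
  shows "is_dist (state_dist K \<mu> t)"
proof (induction t)
  case (Suc t)
  then show ?case
    using assms(1) by (auto simp: is_dist_def is_stochastic_def sum_sum_mult_swap intro!: sum_nonneg)
qed (use assms(2) in simp)

lemma sum_abs_mult_stochastic_le:
  assumes "is_stochastic K"
  shows "(\<Sum>s'\<in>UNIV. \<bar>\<Sum>s\<in>UNIV. x s * K s s'\<bar>) \<le> (\<Sum>s\<in>UNIV. \<bar>x s\<bar>)"
proof -
  have "(\<Sum>s'\<in>UNIV. \<bar>\<Sum>s\<in>UNIV. x s * K s s'\<bar>) \<le> (\<Sum>s'\<in>UNIV. \<Sum>s\<in>UNIV. \<bar>x s\<bar> * K s s')"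
    using assms by (intro sum_mono order.trans[OF sum_abs])
      (simp add: abs_mult is_stochastic_def is_dist_def)
  also have "\<dots> = (\<Sum>s\<in>UNIV. \<bar>x s\<bar>)"
    using assms by (simp add: sum_sum_mult_swap is_stochastic_def is_dist_def)
  finally show ?thesis .
qed

lemma sum_abs_state_dist_le:
  assumes "is_stochastic K"
  shows "(\<Sum>s\<in>UNIV. \<bar>state_dist K \<mu> t s\<bar>) \<le> (\<Sum>s\<in>UNIV. \<bar>\<mu> s\<bar>)"
  by (induction t) (auto intro: order.trans[OF sum_abs_mult_stochastic_le[OF assms]])

lemma summable_disc_sum:
  assumes "is_stochastic K" and "0 \<le> \<gamma>" and "\<gamma> < 1"
  shows "summable (\<lambda>t. \<gamma> ^ t * (\<Sum>s\<in>UNIV. state_dist K \<mu> t s * u s))"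
proof (rule summable_comparison_test)
  let ?c = "(\<Sum>s\<in>UNIV. \<bar>\<mu> s\<bar>) * (\<Sum>s\<in>UNIV. \<bar>u s\<bar>)"
  show "summable (\<lambda>t. \<gamma> ^ t * ?c)"
    using assms by (intro summable_mult2 summable_geometric) auto
  have bound: "\<bar>\<Sum>s\<in>UNIV. state_dist K \<mu> t s * u s\<bar> \<le> ?c" for t
  proof -
    have "\<bar>\<Sum>s\<in>UNIV. state_dist K \<mu> t s * u s\<bar>
        \<le> (\<Sum>s\<in>UNIV. \<bar>state_dist K \<mu> t s\<bar> * (\<Sum>s\<in>UNIV. \<bar>u s\<bar>))"
      by (intro order.trans[OF sum_abs] sum_mono) (auto simp: abs_mult intro!: mult_left_mono member_le_sum)
    also have "\<dots> \<le> ?c"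
      unfolding sum_distrib_right[symmetric]
      by (intro mult_right_mono sum_abs_state_dist_le assms) auto
    finally show ?thesis .
  qed
  then show "\<exists>N. \<forall>t\<ge>N. norm (\<gamma> ^ t * (\<Sum>s\<in>UNIV. state_dist K \<mu> t s * u s)) \<le> \<gamma> ^ t * ?c"
    using assms(2) by (intro exI[of _ 0] allI impI) (simp add: abs_mult mult_left_mono bound)
qed

lemma disc_sum_add:
  assumes "is_stochastic K" and "0 \<le> \<gamma>" and "\<gamma> < 1"
  shows "disc_sum \<gamma> K \<mu> (\<lambda>s. u s + v s) = disc_sum \<gamma> K \<mu> u + disc_sum \<gamma> K \<mu> v"
  unfolding disc_sum_def
  by (subst suminf_add[OF summable_disc_sum[OF assms] summable_disc_sum[OF assms]])
    (simp add: algebra_simps sum.distrib)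

lemma disc_sum_diff:
  assumes "is_stochastic K" and "0 \<le> \<gamma>" and "\<gamma> < 1"
  shows "disc_sum \<gamma> K \<mu> (\<lambda>s. u s - v s) = disc_sum \<gamma> K \<mu> u - disc_sum \<gamma> K \<mu> v"
  unfolding disc_sum_def
  by (subst suminf_diff[OF summable_disc_sum[OF assms] summable_disc_sum[OF assms]])
    (simp add: algebra_simps sum_subtractf)

lemma disc_sum_mult:
  assumes "is_stochastic K" and "0 \<le> \<gamma>" and "\<gamma> < 1"
  shows "disc_sum \<gamma> K \<mu> (\<lambda>s. c * u s) = c * disc_sum \<gamma> K \<mu> u"
  unfolding disc_sum_def
  by (subst suminf_mult[OF summable_disc_sum[OF assms], symmetric])
    (simp add: algebra_simps sum_distrib_left)

lemma state_dist_Suc': "state_dist K \<mu> (Suc t) = state_dist K (state_dist K \<mu> 1) t"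
  by (induction t) auto

lemma disc_sum_unfold:
  assumes "is_stochastic K" and "0 \<le> \<gamma>" and "\<gamma> < 1"
  shows "disc_sum \<gamma> K \<mu> u = (\<Sum>s\<in>UNIV. \<mu> s * u s) + \<gamma> * disc_sum \<gamma> K (state_dist K \<mu> 1) u"
proof -
  have "disc_sum \<gamma> K \<mu> u
      = (\<Sum>s\<in>UNIV. \<mu> s * u s) + (\<Sum>t. \<gamma> * (\<gamma> ^ t * (\<Sum>s\<in>UNIV. state_dist K \<mu> (Suc t) s * u s)))"
    using suminf_split_head[OF summable_disc_sum[OF assms, of \<mu> u]]
    unfolding disc_sum_def by (simp add: mult.assoc)
  also have "\<dots> = (\<Sum>s\<in>UNIV. \<mu> s * u s) + \<gamma> * disc_sum \<gamma> K (state_dist K \<mu> 1) u"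
    unfolding disc_sum_def state_dist_Suc' by (subst suminf_mult) (intro summable_disc_sum assms, simp)
  finally show ?thesis .
qed

lemma disc_sum_state_dist_1:
  "disc_sum \<gamma> K (state_dist K \<mu> 1) u = disc_sum \<gamma> K \<mu> (\<lambda>s. \<Sum>s'\<in>UNIV. K s s' * u s')"
proof -
  have "(\<Sum>s'\<in>UNIV. state_dist K \<mu> (Suc t) s' * u s')
      = (\<Sum>s\<in>UNIV. state_dist K \<mu> t s * (\<Sum>s'\<in>UNIV. K s s' * u s'))" for t
    by (simp add: sum_distrib_left sum_distrib_right mult.assoc) (rule sum.swap)
  then show ?thesis
    unfolding disc_sum_def state_dist_Suc'[symmetric] by simp
qed

lemma disc_sum_telescope:
  assumes "is_stochastic K" and "0 \<le> \<gamma>" and "\<gamma> < 1"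
  shows "disc_sum \<gamma> K \<mu> u
    = (\<Sum>s\<in>UNIV. \<mu> s * V s) + disc_sum \<gamma> K \<mu> (\<lambda>s. u s + \<gamma> * (\<Sum>s'\<in>UNIV. K s s' * V s') - V s)"
proof -
  have "disc_sum \<gamma> K \<mu> V
      = (\<Sum>s\<in>UNIV. \<mu> s * V s) + \<gamma> * disc_sum \<gamma> K \<mu> (\<lambda>s. \<Sum>s'\<in>UNIV. K s s' * V s')"
    using disc_sum_unfold[OF assms, of \<mu> V] unfolding disc_sum_state_dist_1 .
  then show ?thesis
    by (simp add: disc_sum_add[OF assms] disc_sum_diff[OF assms] disc_sum_mult[OF assms])
qed

lemma state_dist_eq_sum_init:
  "state_dist K \<mu> t s = (\<Sum>s0\<in>UNIV. \<mu> s0 * state_dist K (indicator {s0}) t s)"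
proof (induction t arbitrary: s)
  case 0
  show ?case by (simp add: indicator_def if_distrib)
next
  case (Suc t)
  then show ?case
    by (simp add: sum_distrib_left sum_distrib_right mult.assoc) (rule sum.swap)
qed

lemma disc_sum_eq_sum_init:
  assumes "is_stochastic K" and "0 \<le> \<gamma>" and "\<gamma> < 1"
  shows "disc_sum \<gamma> K \<mu> u = (\<Sum>s0\<in>UNIV. \<mu> s0 * disc_sum \<gamma> K (indicator {s0}) u)"
proof -
  have "\<gamma> ^ t * (\<Sum>s\<in>UNIV. state_dist K \<mu> t s * u s)
      = (\<Sum>s0\<in>UNIV. \<mu> s0 * (\<gamma> ^ t * (\<Sum>s\<in>UNIV. state_dist K (indicator {s0}) t s * u s)))" for t
  proof -
    have "\<gamma> ^ t * (\<Sum>s\<in>UNIV. state_dist K \<mu> t s * u s)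
        = \<gamma> ^ t * (\<Sum>s\<in>UNIV. \<Sum>s0\<in>UNIV. \<mu> s0 * (state_dist K (indicator {s0}) t s * u s))"
      by (subst state_dist_eq_sum_init) (simp add: sum_distrib_right mult.assoc)
    also have "\<dots> = \<gamma> ^ t * (\<Sum>s0\<in>UNIV. \<Sum>s\<in>UNIV. \<mu> s0 * (state_dist K (indicator {s0}) t s * u s))"
      by (subst sum.swap) (rule refl)
    finally show ?thesis by (simp add: sum_distrib_left mult_ac)
  qed
  then have "disc_sum \<gamma> K \<mu> u
      = (\<Sum>s0\<in>UNIV. \<Sum>t. \<mu> s0 * (\<gamma> ^ t * (\<Sum>s\<in>UNIV. state_dist K (indicator {s0}) t s * u s)))"
    unfolding disc_sum_def by (simp add: suminf_sum summable_mult summable_disc_sum assms)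
  then show ?thesis
    unfolding disc_sum_def by (simp add: suminf_mult summable_disc_sum assms)
qed

lemma sa_dist_product:
  "sa_dist P \<rho> (\<lambda>s a. \<mu> s * \<rho> s a) t s a = state_dist (policy_kernel \<rho> P) \<mu> t s * \<rho> s a"
  by (induction t arbitrary: s a)
    (simp_all add: policy_kernel_def sum_distrib_left sum_distrib_right mult_ac)

lemma sum_sa_dist_product:
  "(\<Sum>s\<in>UNIV. \<Sum>a\<in>UNIV. sa_dist P \<rho> (\<lambda>s a. \<mu> s * \<rho> s a) t s a * (\<Sum>s'\<in>UNIV. P s a s' * f s a s'))
    = (\<Sum>s\<in>UNIV. state_dist (policy_kernel \<rho> P) \<mu> t s * exp_reward \<rho> P f s)"
  by (simp add: sa_dist_product exp_reward_def sum_distrib_left mult.assoc)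

lemma disc_return_product:
  "disc_return \<gamma> f P \<rho> (\<lambda>s a. \<mu> s * \<rho> s a) = disc_sum \<gamma> (policy_kernel \<rho> P) \<mu> (exp_reward \<rho> P f)"
  unfolding disc_return_def disc_sum_def sum_sa_dist_product ..

lemma J_eq_disc_sum: "J \<gamma> f P \<mu> \<rho> = disc_sum \<gamma> (policy_kernel \<rho> P) \<mu> (exp_reward \<rho> P f)"
  unfolding J_def by (rule disc_return_product)

lemma Vf_eq_disc_sum:
  "Vf \<gamma> f P \<rho> s = disc_sum \<gamma> (policy_kernel \<rho> P) (indicator {s}) (exp_reward \<rho> P f)"
  using disc_return_product[of \<gamma> f P \<rho> "indicator {s}"]
  unfolding Vf_def indicator_def of_bool_def by simp

lemma sa_dist_Suc': "sa_dist P \<rho> \<nu> (Suc t) = sa_dist P \<rho> (sa_dist P \<rho> \<nu> 1) t"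
  by (induction t) auto

lemma sum_point_mass_mult:
  fixes s0 :: "'s::finite" and a0 :: "'a::finite"
  shows "(\<Sum>s\<in>UNIV. \<Sum>a\<in>UNIV. (if s = s0 \<and> a = a0 then 1 else 0) * (X s a :: real)) = X s0 a0"
proof -
  have "(\<Sum>a\<in>UNIV. (if s = s0 \<and> a = a0 then 1 else 0) * X s a) = (if s = s0 then X s a0 else 0)" for s
    by (cases "s = s0") (simp_all add: if_distrib[where f = "\<lambda>c. c * _"] cong: if_cong)
  then show ?thesis by simp
qed

lemma Qf_eq_disc_sum:
  assumes "is_stochastic (policy_kernel \<rho> P)" and "0 \<le> \<gamma>" and "\<gamma> < 1"
  shows "Qf \<gamma> f P \<rho> s0 a0 = (\<Sum>s'\<in>UNIV. P s0 a0 s' * f s0 a0 s')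
    + \<gamma> * disc_sum \<gamma> (policy_kernel \<rho> P) (P s0 a0) (exp_reward \<rho> P f)"
proof -
  define \<nu> where "\<nu> s a = (if s = s0 \<and> a = a0 then 1 else 0 :: real)" for s a
  define F where "F t = \<gamma> ^ t * (\<Sum>s\<in>UNIV. \<Sum>a\<in>UNIV. sa_dist P \<rho> \<nu> t s a * (\<Sum>s'\<in>UNIV. P s a s' * f s a s'))"
    for t
  have "sa_dist P \<rho> \<nu> 1 = (\<lambda>s a. P s0 a0 s * \<rho> s a)"
    by (simp add: \<nu>_def sum_point_mass_mult)
  then have F_Suc: "F (Suc t)
      = \<gamma> * (\<gamma> ^ t * (\<Sum>s\<in>UNIV. state_dist (policy_kernel \<rho> P) (P s0 a0) t s * exp_reward \<rho> P f s))"
    for t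
    unfolding F_def sa_dist_Suc' by (simp add: sum_sa_dist_product)
  have "summable (\<lambda>t. F (Suc t))"
    unfolding F_Suc by (intro summable_mult summable_disc_sum assms)
  then have "summable F" by (simp only: summable_Suc_iff)
  have "Qf \<gamma> f P \<rho> s0 a0 = suminf F"
    unfolding Qf_def disc_return_def F_def \<nu>_def ..
  also have "\<dots> = F 0 + (\<Sum>t. F (Suc t))"
    using suminf_split_head[OF \<open>summable F\<close>] by simp
  also have "(\<Sum>t. F (Suc t)) = \<gamma> * disc_sum \<gamma> (policy_kernel \<rho> P) (P s0 a0) (exp_reward \<rho> P f)"
    unfolding F_Suc disc_sum_def by (intro suminf_mult summable_disc_sum assms)
  finally show ?thesis
    by (simp add: F_def \<nu>_def sum_point_mass_mult)
qed

lemma Vf_bellman: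
  assumes "is_stochastic (policy_kernel \<rho> P)" and "0 \<le> \<gamma>" and "\<gamma> < 1"
  shows "Vf \<gamma> f P \<rho> s
    = exp_reward \<rho> P f s + \<gamma> * (\<Sum>s'\<in>UNIV. policy_kernel \<rho> P s s' * Vf \<gamma> f P \<rho> s')"
  unfolding Vf_eq_disc_sum
  by (subst disc_sum_unfold[OF assms], subst disc_sum_eq_sum_init[OF assms, of "state_dist _ _ 1"])
    (simp add: indicator_def if_distrib sum.delta cong: if_cong)

lemma Qf_bellman:
  assumes "is_stochastic (policy_kernel \<rho> P)" and "0 \<le> \<gamma>" and "\<gamma> < 1"
  shows "Qf \<gamma> f P \<rho> s a
    = (\<Sum>s'\<in>UNIV. P s a s' * f s a s') + \<gamma> * (\<Sum>s'\<in>UNIV. P s a s' * Vf \<gamma> f P \<rho> s')"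
  unfolding Qf_eq_disc_sum[OF assms] Vf_eq_disc_sum
  by (subst disc_sum_eq_sum_init[OF assms]) (rule refl)

lemma expectation_td_error:
  assumes "is_dist p"
  shows "(\<Sum>x\<in>UNIV. p x * (f x + \<gamma> * V x - v)) = (\<Sum>x\<in>UNIV. p x * f x) + \<gamma> * (\<Sum>x\<in>UNIV. p x * V x) - v"
proof -
  have "(\<Sum>x\<in>UNIV. p x * (f x + \<gamma> * V x - v))
      = (\<Sum>x\<in>UNIV. p x * f x) + \<gamma> * (\<Sum>x\<in>UNIV. p x * V x) - v * (\<Sum>x\<in>UNIV. p x)"
    by (simp add: algebra_simps sum.distrib sum_subtractf sum_distrib_left)
  with assms show ?thesis by (simp add: is_dist_def)
qed

lemma sum_policy_td_error:
  assumes "is_policy \<rho>" and "is_kernel P"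
  shows "(\<Sum>a\<in>UNIV. \<rho> s a * (\<Sum>s'\<in>UNIV. P s a s' * td_error \<gamma> f V s a s'))
    = exp_reward \<rho> P f s + \<gamma> * (\<Sum>s'\<in>UNIV. policy_kernel \<rho> P s s' * V s') - V s"
proof -
  have "(\<Sum>a\<in>UNIV. \<rho> s a * (\<Sum>s'\<in>UNIV. P s a s' * V s')) = (\<Sum>s'\<in>UNIV. policy_kernel \<rho> P s s' * V s')"
    unfolding policy_kernel_def
    by (simp add: sum_distrib_left sum_distrib_right mult.assoc) (rule sum.swap)
  with assms show ?thesis
    by (simp add: td_error_def is_policy_def is_kernel_def expectation_td_error exp_reward_def)
qed

lemma Af_eq_td_error:
  assumes "is_policy \<pi>" and "is_kernel P" and "0 \<le> \<gamma>" and "\<gamma> < 1"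
  shows "Af \<gamma> f P \<pi> s a = (\<Sum>s'\<in>UNIV. P s a s' * td_error \<gamma> f (Vf \<gamma> f P \<pi>) s a s')"
  using assms
  by (simp add: Af_def td_error_def Qf_bellman is_stochastic_policy_kernel is_kernel_def
      expectation_td_error)

lemma sum_policy_Af:
  assumes "is_policy \<pi>" and "is_kernel P" and "0 \<le> \<gamma>" and "\<gamma> < 1"
  shows "(\<Sum>a\<in>UNIV. \<pi> s a * Af \<gamma> f P \<pi> s a) = 0"
  unfolding Af_eq_td_error[OF assms] sum_policy_td_error[OF assms(1,2)]
  using Vf_bellman[OF is_stochastic_policy_kernel[OF assms(1,2)] assms(3,4), of f s] by simp

lemma J_telescope:
  assumes "is_policy \<rho>" and "is_kernel P" and "0 \<le> \<gamma>" and "\<gamma> < 1"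
  shows "J \<gamma> f P \<mu> \<rho> = (\<Sum>s\<in>UNIV. \<mu> s * V s)
    + disc_sum \<gamma> (policy_kernel \<rho> P) \<mu> (\<lambda>s. \<Sum>a\<in>UNIV. \<rho> s a * (\<Sum>s'\<in>UNIV. P s a s' * td_error \<gamma> f V s a s'))"
  unfolding J_eq_disc_sum sum_policy_td_error[OF assms(1,2)]
  by (rule disc_sum_telescope[OF is_stochastic_policy_kernel[OF assms(1,2)] assms(3,4)])

lemma disc_sum_eq_occupancy:
  assumes "is_stochastic K" and "0 \<le> \<gamma>" and "\<gamma> < 1"
  shows "disc_sum \<gamma> K \<mu> u = (\<Sum>s\<in>UNIV. (\<Sum>t. \<gamma> ^ t * state_dist K \<mu> t s) * u s)"
proof -
  have "summable (\<lambda>t. \<gamma> ^ t * state_dist K \<mu> t s)" for s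
    using summable_disc_sum[OF assms, of \<mu> "indicator {s}"]
    by (simp add: indicator_def of_bool_def if_distrib[where f = "\<lambda>c. _ * c"] cong: if_cong)
  then have "(\<Sum>s\<in>UNIV. (\<Sum>t. \<gamma> ^ t * state_dist K \<mu> t s) * u s)
      = (\<Sum>t. \<Sum>s\<in>UNIV. \<gamma> ^ t * state_dist K \<mu> t s * u s)"
    by (simp add: suminf_mult2 suminf_sum summable_mult2)
  then show ?thesis
    by (simp add: disc_sum_def sum_distrib_left mult.assoc)
qed

lemma dstate_eq_occupancy:
  assumes "is_policy \<rho>"
  shows "dstate \<gamma> P \<mu> \<rho> s = (1 - \<gamma>) * (\<Sum>t. \<gamma> ^ t * state_dist (policy_kernel \<rho> P) \<mu> t s)"
proof -
  have "(\<Sum>a\<in>UNIV. sa_dist P \<rho> (\<lambda>s a. \<mu> s * \<rho> s a) t s a) = state_dist (policy_kernel \<rho> P) \<mu> t s" for t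
    using assms unfolding sa_dist_product sum_distrib_left[symmetric]
    by (simp add: is_policy_def is_dist_def)
  then show ?thesis by (simp add: dstate_def)
qed

lemma Lsur_eq_disc_sum:
  assumes "is_policy \<pi>" and "is_kernel P" and "0 \<le> \<gamma>" and "\<gamma> < 1"
  shows "Lsur \<gamma> f P \<mu> \<pi> \<pi>'
    = (1 - \<gamma>) * disc_sum \<gamma> (policy_kernel \<pi> P) \<mu> (\<lambda>s. \<Sum>a\<in>UNIV. \<pi>' s a * Af \<gamma> f P \<pi> s a)"
  unfolding Lsur_def dstate_eq_occupancy[OF assms(1)]
    disc_sum_eq_occupancy[OF is_stochastic_policy_kernel[OF assms(1,2)] assms(3,4)]
  by (simp add: sum_distrib_left mult.assoc)

lemma J_diff_sub_Lsur_eq: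
  fixes f :: "'s::finite \<Rightarrow> 'a::finite \<Rightarrow> 's \<Rightarrow> real"
  assumes "0 \<le> \<gamma>" and "\<gamma> < 1" and "is_kernel P" and "is_kernel Pm"
    and "is_policy \<pi>" and "is_policy \<pi>'"
  defines "\<delta> \<equiv> td_error \<gamma> f (Vf \<gamma> f Pm \<pi>)"
  shows "J \<gamma> f P \<mu> \<pi>' - J \<gamma> f P \<mu> \<pi> - Lsur \<gamma> f Pm \<mu> \<pi> \<pi>' / (1 - \<gamma>)
    = disc_sum \<gamma> (policy_kernel \<pi>' P) \<mu> (\<lambda>s. \<Sum>a\<in>UNIV. \<pi>' s a * (\<Sum>s'\<in>UNIV. P s a s' * \<delta> s a s'))
      - disc_sum \<gamma> (policy_kernel \<pi> P) \<mu> (\<lambda>s. \<Sum>a\<in>UNIV. \<pi> s a * (\<Sum>s'\<in>UNIV. P s a s' * \<delta> s a s'))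
      - disc_sum \<gamma> (policy_kernel \<pi> Pm) \<mu> (\<lambda>s. \<Sum>a\<in>UNIV. \<pi>' s a * Af \<gamma> f Pm \<pi> s a)"
  using J_telescope[OF assms(6,3,1,2), of f \<mu> "Vf \<gamma> f Pm \<pi>"]
    J_telescope[OF assms(5,3,1,2), of f \<mu> "Vf \<gamma> f Pm \<pi>"]
    Lsur_eq_disc_sum[OF assms(5,4,1,2), of f \<mu> \<pi>'] assms(2)
  unfolding \<delta>_def by simp

lemma abs_suminf_le:
  fixes f :: "nat \<Rightarrow> real"
  assumes "summable f" and "g sums S" and "\<And>n. \<bar>f n\<bar> \<le> g n"
  shows "\<bar>suminf f\<bar> \<le> S"
proof -
  have "suminf f \<le> S"
    by (rule sums_le[OF _ summable_sums[OF assms(1)] assms(2)]) (use assms(3) in \<open>simp add: abs_le_iff\<close>)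
  moreover have "- suminf f \<le> S"
    by (rule sums_le[OF _ sums_minus[OF summable_sums[OF assms(1)]] assms(2)])
      (use assms(3) in \<open>simp add: abs_le_iff\<close>)
  ultimately show ?thesis by linarith
qed

lemma abs_expectation_le:
  assumes "is_dist p" and "\<And>x. \<bar>y x\<bar> \<le> B"
  shows "\<bar>\<Sum>x\<in>UNIV. p x * y x\<bar> \<le> B"
proof -
  have "\<bar>\<Sum>x\<in>UNIV. p x * y x\<bar> \<le> (\<Sum>x\<in>UNIV. p x * B)"
    using assms by (intro order.trans[OF sum_abs] sum_mono) (simp add: abs_mult mult_left_mono is_dist_def)
  also have "\<dots> = B"
    using assms(1) by (simp add: is_dist_def sum_distrib_right[symmetric])
  finally show ?thesis .
qed

lemma abs_disc_sum_le:
  assumes "is_stochastic K" and "0 \<le> \<gamma>" and "\<gamma> < 1" and "is_dist \<mu>" and "\<And>s. \<bar>u s\<bar> \<le> B"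
  shows "\<bar>disc_sum \<gamma> K \<mu> u\<bar> \<le> B / (1 - \<gamma>)"
  unfolding disc_sum_def
proof (rule abs_suminf_le[OF summable_disc_sum[OF assms(1-3)]])
  show "(\<lambda>t. \<gamma> ^ t * B) sums (B / (1 - \<gamma>))"
    using sums_mult2[OF geometric_sums, of \<gamma> B] assms(2,3) by simp
  show "\<bar>\<gamma> ^ t * (\<Sum>s\<in>UNIV. state_dist K \<mu> t s * u s)\<bar> \<le> \<gamma> ^ t * B" for t
    using abs_expectation_le[OF is_dist_state_dist[OF assms(1,4)] assms(5)] assms(2)
    by (simp add: abs_mult mult_left_mono)
qed

lemma sums_of_nat_mult_power:
  fixes \<gamma> :: real
  assumes "0 \<le> \<gamma>" and "\<gamma> < 1"
  shows "(\<lambda>n. real n * \<gamma> ^ n) sums (\<gamma> / (1 - \<gamma>)\<^sup>2)"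
proof -
  have "(\<lambda>n. \<gamma> * (real (Suc n) * \<gamma> ^ n)) sums (\<gamma> * (1 / (1 - \<gamma>)\<^sup>2))"
    using assms by (intro sums_mult geometric_deriv_sums) auto
  then have "(\<lambda>n. real (Suc n) * \<gamma> ^ Suc n) sums (\<gamma> / (1 - \<gamma>)\<^sup>2)"
    by (simp add: mult_ac)
  then show ?thesis by (subst (asm) sums_Suc_iff) simp
qed

lemma sum_abs_mult_stochastic_diff_le:
  assumes "is_stochastic K1" and "is_dist y" and "\<And>s. (\<Sum>s'\<in>UNIV. \<bar>K1 s s' - K2 s s'\<bar>) \<le> 2 * \<eta>"
  shows "(\<Sum>s'\<in>UNIV. \<bar>(\<Sum>s\<in>UNIV. x s * K1 s s') - (\<Sum>s\<in>UNIV. y s * K2 s s')\<bar>)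
    \<le> (\<Sum>s\<in>UNIV. \<bar>x s - y s\<bar>) + 2 * \<eta>"
proof -
  define D where "D s' = (\<Sum>s\<in>UNIV. (x s - y s) * K1 s s')" for s'
  define E where "E s' = (\<Sum>s\<in>UNIV. y s * (K1 s s' - K2 s s'))" for s'
  have "(\<Sum>s\<in>UNIV. x s * K1 s s') - (\<Sum>s\<in>UNIV. y s * K2 s s') = D s' + E s'" for s'
    by (simp add: D_def E_def left_diff_distrib right_diff_distrib sum_subtractf)
  then have "(\<Sum>s'\<in>UNIV. \<bar>(\<Sum>s\<in>UNIV. x s * K1 s s') - (\<Sum>s\<in>UNIV. y s * K2 s s')\<bar>)
      \<le> (\<Sum>s'\<in>UNIV. \<bar>D s'\<bar>) + (\<Sum>s'\<in>UNIV. \<bar>E s'\<bar>)"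
    by (simp add: sum.distrib[symmetric] sum_mono abs_triangle_ineq)
  moreover have "(\<Sum>s'\<in>UNIV. \<bar>D s'\<bar>) \<le> (\<Sum>s\<in>UNIV. \<bar>x s - y s\<bar>)"
    unfolding D_def by (rule sum_abs_mult_stochastic_le[OF assms(1)])
  moreover have "(\<Sum>s'\<in>UNIV. \<bar>E s'\<bar>) \<le> (\<Sum>s'\<in>UNIV. \<Sum>s\<in>UNIV. y s * \<bar>K1 s s' - K2 s s'\<bar>)"
    unfolding E_def using assms(2)
    by (intro sum_mono order.trans[OF sum_abs]) (simp add: abs_mult is_dist_def)
  moreover have "(\<Sum>s'\<in>UNIV. \<Sum>s\<in>UNIV. y s * \<bar>K1 s s' - K2 s s'\<bar>) \<le> 2 * \<eta>"
    unfolding sum_sum_mult_swap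
    by (rule abs_le_D1[OF abs_expectation_le[OF assms(2)]]) (simp add: assms(3))
  ultimately show ?thesis by linarith
qed

lemma sum_abs_state_dist_diff_le:
  assumes "is_stochastic K1" and "is_stochastic K2" and "is_dist \<mu>"
    and "\<And>s. (\<Sum>s'\<in>UNIV. \<bar>K1 s s' - K2 s s'\<bar>) \<le> 2 * \<eta>"
  shows "(\<Sum>s\<in>UNIV. \<bar>state_dist K1 \<mu> t s - state_dist K2 \<mu> t s\<bar>) \<le> 2 * \<eta> * real t"
proof (induction t)
  case (Suc t)
  have "(\<Sum>s\<in>UNIV. \<bar>state_dist K1 \<mu> (Suc t) s - state_dist K2 \<mu> (Suc t) s\<bar>)
      \<le> (\<Sum>s\<in>UNIV. \<bar>state_dist K1 \<mu> t s - state_dist K2 \<mu> t s\<bar>) + 2 * \<eta>"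
    unfolding state_dist.simps
    by (rule sum_abs_mult_stochastic_diff_le[OF assms(1) is_dist_state_dist[OF assms(2,3)] assms(4)])
  with Suc.IH show ?case by (simp add: algebra_simps)
qed simp

lemma abs_sum_diff_mult_le:
  fixes p q y :: "'x::finite \<Rightarrow> real"
  assumes "\<And>x. \<bar>y x\<bar> \<le> B"
  shows "\<bar>\<Sum>x\<in>UNIV. (p x - q x) * y x\<bar> \<le> (\<Sum>x\<in>UNIV. \<bar>p x - q x\<bar>) * B"
proof -
  have "\<bar>\<Sum>x\<in>UNIV. (p x - q x) * y x\<bar> \<le> (\<Sum>x\<in>UNIV. \<bar>p x - q x\<bar> * B)"
    using assms by (intro order.trans[OF sum_abs] sum_mono) (simp add: abs_mult mult_left_mono)
  then show ?thesis by (simp add: sum_distrib_right)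
qed

lemma abs_disc_sum_diff_le:
  assumes "is_stochastic K1" and "is_stochastic K2" and "0 \<le> \<gamma>" and "\<gamma> < 1" and "is_dist \<mu>"
    and "\<And>s. (\<Sum>s'\<in>UNIV. \<bar>K1 s s' - K2 s s'\<bar>) \<le> 2 * \<eta>" and "\<And>s. \<bar>u s\<bar> \<le> B"
  shows "\<bar>disc_sum \<gamma> K1 \<mu> u - disc_sum \<gamma> K2 \<mu> u\<bar> \<le> 2 * \<eta> * B * (\<gamma> / (1 - \<gamma>)\<^sup>2)"
proof -
  have "0 \<le> B" using assms(7) abs_ge_zero order.trans by blast
  have term_bound: "\<bar>(\<Sum>s\<in>UNIV. state_dist K1 \<mu> t s * u s) - (\<Sum>s\<in>UNIV. state_dist K2 \<mu> t s * u s)\<bar>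
      \<le> 2 * \<eta> * B * real t" for t
  proof -
    have "\<bar>(\<Sum>s\<in>UNIV. state_dist K1 \<mu> t s * u s) - (\<Sum>s\<in>UNIV. state_dist K2 \<mu> t s * u s)\<bar>
        \<le> (\<Sum>s\<in>UNIV. \<bar>state_dist K1 \<mu> t s - state_dist K2 \<mu> t s\<bar>) * B"
      using abs_sum_diff_mult_le[OF assms(7)] by (simp add: sum_subtractf left_diff_distrib)
    also have "\<dots> \<le> 2 * \<eta> * real t * B"
      by (intro mult_right_mono sum_abs_state_dist_diff_le assms \<open>0 \<le> B\<close>)
    finally show ?thesis by (simp add: mult_ac)
  qed
  have "\<bar>\<gamma> ^ t * (\<Sum>s\<in>UNIV. state_dist K1 \<mu> t s * u s) - \<gamma> ^ t * (\<Sum>s\<in>UNIV. state_dist K2 \<mu> t s * u s)\<bar>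
      \<le> 2 * \<eta> * B * (real t * \<gamma> ^ t)" for t
    using mult_left_mono[OF term_bound[of t], of "\<gamma> ^ t"] assms(3)
    by (simp add: abs_mult right_diff_distrib[symmetric] mult_ac)
  moreover have "(\<lambda>t. 2 * \<eta> * B * (real t * \<gamma> ^ t)) sums (2 * \<eta> * B * (\<gamma> / (1 - \<gamma>)\<^sup>2))"
    by (rule sums_mult[OF sums_of_nat_mult_power[OF assms(3,4)]])
  ultimately show ?thesis
    unfolding disc_sum_def suminf_diff[OF summable_disc_sum[OF assms(1,3,4)] summable_disc_sum[OF assms(2,3,4)]]
    by (intro abs_suminf_le summable_diff summable_disc_sum assms)
qed

lemma dTV_nonneg: "0 \<le> dTV p q"
  by (simp add: dTV_def sum_nonneg)

lemma abs_sum_diff_mult_le_dTV: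
  fixes p q y :: "'x::finite \<Rightarrow> real"
  assumes "\<And>x. \<bar>y x\<bar> \<le> B"
  shows "\<bar>\<Sum>x\<in>UNIV. (p x - q x) * y x\<bar> \<le> 2 * dTV p q * B"
  using abs_sum_diff_mult_le[OF assms, of p q] by (simp add: dTV_def)

lemma centered_expectation_bounds:
  fixes p p' A \<Delta> :: "'x::finite \<Rightarrow> real"
  assumes "is_dist p" and "(\<Sum>x\<in>UNIV. p x * A x) = 0"
    and "\<And>x. \<bar>A x\<bar> \<le> d" and "\<And>x. \<bar>\<Delta> x - A x\<bar> \<le> c"
  shows "\<bar>\<Sum>x\<in>UNIV. p' x * A x\<bar> \<le> 2 * dTV p' p * d"
    and "\<bar>\<Sum>x\<in>UNIV. p x * \<Delta> x\<bar> \<le> c"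
    and "\<bar>(\<Sum>x\<in>UNIV. p' x * \<Delta> x) - (\<Sum>x\<in>UNIV. p' x * A x) - (\<Sum>x\<in>UNIV. p x * \<Delta> x)\<bar>
      \<le> 2 * dTV p' p * c"
proof -
  show "\<bar>\<Sum>x\<in>UNIV. p' x * A x\<bar> \<le> 2 * dTV p' p * d"
    using abs_sum_diff_mult_le_dTV[where y = A and B = d and p = p' and q = p, OF assms(3)] assms(2)
    by (simp add: left_diff_distrib sum_subtractf)
  show "\<bar>\<Sum>x\<in>UNIV. p x * \<Delta> x\<bar> \<le> c"
    using abs_expectation_le[where y = "\<lambda>x. \<Delta> x - A x" and B = c, OF assms(1,4)] assms(2)
    by (simp add: right_diff_distrib sum_subtractf)
  show "\<bar>(\<Sum>x\<in>UNIV. p' x * \<Delta> x) - (\<Sum>x\<in>UNIV. p' x * A x) - (\<Sum>x\<in>UNIV. p x * \<Delta> x)\<bar>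
      \<le> 2 * dTV p' p * c"
    using abs_sum_diff_mult_le_dTV[where y = "\<lambda>x. \<Delta> x - A x" and B = c and p = p' and q = p, OF assms(4)] assms(2)
    by (simp add: left_diff_distrib right_diff_distrib sum_subtractf)
qed

lemma sum_abs_policy_kernel_diff_le:
  assumes "is_kernel P" and "is_policy \<rho>'" and "\<And>a. dTV (P s a) (Q s a) \<le> e"
  shows "(\<Sum>s'\<in>UNIV. \<bar>policy_kernel \<rho> P s s' - policy_kernel \<rho>' Q s s'\<bar>) \<le> 2 * (dTV (\<rho> s) (\<rho>' s) + e)"
proof -
  have "is_stochastic (P s)" and "is_dist (\<rho>' s)"
    using assms(1,2) by (simp_all add: is_kernel_def is_stochastic_def is_policy_def)
  moreover have "(\<Sum>s'\<in>UNIV. \<bar>P s a s' - Q s a s'\<bar>) \<le> 2 * e" for a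
    using assms(3)[of a] by (simp add: dTV_def)
  ultimately have "(\<Sum>s'\<in>UNIV. \<bar>policy_kernel \<rho> P s s' - policy_kernel \<rho>' Q s s'\<bar>)
      \<le> (\<Sum>a\<in>UNIV. \<bar>\<rho> s a - \<rho>' s a\<bar>) + 2 * e"
    unfolding policy_kernel_def by (rule sum_abs_mult_stochastic_diff_le)
  then show ?thesis by (simp add: dTV_def)
qed

lemma delta_max_ge: "\<bar>td_error \<gamma> f (Vf \<gamma> f P \<pi>) s a s'\<bar> \<le> delta_max \<gamma> f P \<pi>"
  unfolding delta_max_def td_error_def
proof (rule Max_ge)
  show "finite {\<bar>f s a s' + \<gamma> * Vf \<gamma> f P \<pi> s' - Vf \<gamma> f P \<pi> s\<bar> | s a s'. True}"
    using finite_image_set2[of "\<lambda>_. True" "\<lambda>_. True"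
        "\<lambda>s (a, s'). \<bar>f s a s' + \<gamma> * Vf \<gamma> f P \<pi> s' - Vf \<gamma> f P \<pi> s\<bar>"]
    by (simp add: case_prod_beta)
qed blast

lemma eps_pi_ge: "dTV (\<pi>' s) (\<pi> s) \<le> eps_pi \<pi> \<pi>'"
  unfolding eps_pi_def by (rule Max_ge) (auto simp: full_SetCompr_eq)

lemma eps_m_ge: "dTV (P s a) (Pm s a) \<le> eps_m P Pm"
  unfolding eps_m_def
  by (rule Max_ge) (use finite_image_set2[of "\<lambda>_. True" "\<lambda>_. True" "\<lambda>s a. dTV (P s a) (Pm s a)"] in auto)

lemma delta_max_nonneg: "0 \<le> delta_max \<gamma> f P \<pi>"
  by (meson abs_ge_zero delta_max_ge order.trans)

lemma eps_m_nonneg: "0 \<le> eps_m P Pm"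
  by (meson dTV_nonneg eps_m_ge order.trans)

lemma abs_Af_le:
  assumes "is_policy \<pi>" and "is_kernel Pm" and "0 \<le> \<gamma>" and "\<gamma> < 1"
  shows "\<bar>Af \<gamma> f Pm \<pi> s a\<bar> \<le> delta_max \<gamma> f Pm \<pi>"
  unfolding Af_eq_td_error[OF assms] using assms(2)
  by (intro abs_expectation_le delta_max_ge) (simp add: is_kernel_def)

lemma abs_expected_td_error_sub_Af_le:
  assumes "is_policy \<pi>" and "is_kernel Pm" and "0 \<le> \<gamma>" and "\<gamma> < 1"
  shows "\<bar>(\<Sum>s'\<in>UNIV. P s a s' * td_error \<gamma> f (Vf \<gamma> f Pm \<pi>) s a s') - Af \<gamma> f Pm \<pi> s a\<bar>
    \<le> 2 * eps_m P Pm * delta_max \<gamma> f Pm \<pi>"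
proof -
  have "\<bar>(\<Sum>s'\<in>UNIV. P s a s' * td_error \<gamma> f (Vf \<gamma> f Pm \<pi>) s a s') - Af \<gamma> f Pm \<pi> s a\<bar>
      \<le> 2 * dTV (P s a) (Pm s a) * delta_max \<gamma> f Pm \<pi>"
    using abs_sum_diff_mult_le_dTV[where p = "P s a" and q = "Pm s a"
        and y = "td_error \<gamma> f (Vf \<gamma> f Pm \<pi>) s a" and B = "delta_max \<gamma> f Pm \<pi>", OF delta_max_ge]
    by (simp add: Af_eq_td_error[OF assms] left_diff_distrib sum_subtractf)
  also have "\<dots> \<le> 2 * eps_m P Pm * delta_max \<gamma> f Pm \<pi>"
    using eps_m_ge delta_max_nonneg by (intro mult_right_mono) auto
  finally show ?thesis .
qed

lemma abs_disc_sum_perturbation_le: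
  assumes "is_stochastic K'" and "is_stochastic K" and "is_stochastic Km" and "is_dist \<mu>"
    and "0 \<le> \<gamma>" and "\<gamma> < 1"
    and K'_Km: "\<And>s. (\<Sum>s'\<in>UNIV. \<bar>K' s s' - Km s s'\<bar>) \<le> 2 * (ep + em)"
    and K'_K: "\<And>s. (\<Sum>s'\<in>UNIV. \<bar>K' s s' - K s s'\<bar>) \<le> 2 * ep"
    and h: "\<And>s. \<bar>h s\<bar> \<le> 2 * ep * dm" and g: "\<And>s. \<bar>g s\<bar> \<le> 2 * em * dm"
    and w: "\<And>s. \<bar>g' s - h s - g s\<bar> \<le> 2 * ep * (2 * em * dm)"
  shows "\<bar>disc_sum \<gamma> K' \<mu> g' - disc_sum \<gamma> K \<mu> g - disc_sum \<gamma> Km \<mu> h\<bar>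
    \<le> 4 * dm * eps_total \<gamma> ep em / (1 - \<gamma>)"
proof -
  have "disc_sum \<gamma> K' \<mu> g'
      = disc_sum \<gamma> K' \<mu> h + disc_sum \<gamma> K' \<mu> (\<lambda>s. g' s - h s - g s) + disc_sum \<gamma> K' \<mu> g"
    by (simp add: disc_sum_diff[OF assms(1,5,6)])
  moreover have "\<bar>disc_sum \<gamma> K' \<mu> h - disc_sum \<gamma> Km \<mu> h\<bar> \<le> 2 * (ep + em) * (2 * ep * dm) * (\<gamma> / (1 - \<gamma>)\<^sup>2)"
    by (rule abs_disc_sum_diff_le[OF assms(1,3,5,6,4) K'_Km h])
  moreover have "\<bar>disc_sum \<gamma> K' \<mu> g - disc_sum \<gamma> K \<mu> g\<bar> \<le> 2 * ep * (2 * em * dm) * (\<gamma> / (1 - \<gamma>)\<^sup>2)"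
    by (rule abs_disc_sum_diff_le[OF assms(1,2,5,6,4) K'_K g])
  moreover have "\<bar>disc_sum \<gamma> K' \<mu> (\<lambda>s. g' s - h s - g s)\<bar> \<le> 2 * ep * (2 * em * dm) / (1 - \<gamma>)"
    by (rule abs_disc_sum_le[OF assms(1,5,6,4) w])
  moreover have "2 * (ep + em) * (2 * ep * dm) * (\<gamma> / (1 - \<gamma>)\<^sup>2) + 2 * ep * (2 * em * dm) / (1 - \<gamma>)
      + 2 * ep * (2 * em * dm) * (\<gamma> / (1 - \<gamma>)\<^sup>2) = 4 * dm * eps_total \<gamma> ep em / (1 - \<gamma>)"
    using assms(5,6) unfolding eps_total_def
    by (simp add: divide_simps power2_eq_square) (simp add: algebra_simps)
  ultimately show ?thesis by linarith
qed

lemma abs_J_diff_sub_Lsur_le: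
  fixes f :: "'s::finite \<Rightarrow> 'a::finite \<Rightarrow> 's \<Rightarrow> real"
  assumes "0 \<le> \<gamma>" and "\<gamma> < 1" and "is_kernel P" and "is_kernel Pm" and "is_dist \<mu>"
    and "is_policy \<pi>" and "is_policy \<pi>'"
  shows "\<bar>J \<gamma> f P \<mu> \<pi>' - J \<gamma> f P \<mu> \<pi> - Lsur \<gamma> f Pm \<mu> \<pi> \<pi>' / (1 - \<gamma>)\<bar>
    \<le> 4 * delta_max \<gamma> f Pm \<pi> * eps_total \<gamma> (eps_pi \<pi> \<pi>') (eps_m P Pm) / (1 - \<gamma>)"
proof -
  define A where "A = Af \<gamma> f Pm \<pi>"
  define \<Delta> where "\<Delta> s a = (\<Sum>s'\<in>UNIV. P s a s' * td_error \<gamma> f (Vf \<gamma> f Pm \<pi>) s a s')" for s a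
  define ep em dm where "ep = eps_pi \<pi> \<pi>'" and "em = eps_m P Pm" and "dm = delta_max \<gamma> f Pm \<pi>"
  have A_le: "\<bar>A s a\<bar> \<le> dm" and \<Delta>_A_le: "\<bar>\<Delta> s a - A s a\<bar> \<le> 2 * em * dm" for s a
    unfolding A_def \<Delta>_def em_def dm_def
    by (rule abs_Af_le[OF assms(6,4,1,2)] abs_expected_td_error_sub_Af_le[OF assms(6,4,1,2)])+
  have "is_dist (\<pi> s)" and "(\<Sum>a\<in>UNIV. \<pi> s a * A s a) = 0" for s
    using assms(6) sum_policy_Af[OF assms(6,4,1,2)] by (simp_all add: A_def is_policy_def)
  then have bounds: "\<bar>\<Sum>a\<in>UNIV. \<pi>' s a * A s a\<bar> \<le> 2 * dTV (\<pi>' s) (\<pi> s) * dm"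
    "\<bar>\<Sum>a\<in>UNIV. \<pi> s a * \<Delta> s a\<bar> \<le> 2 * em * dm"
    "\<bar>(\<Sum>a\<in>UNIV. \<pi>' s a * \<Delta> s a) - (\<Sum>a\<in>UNIV. \<pi>' s a * A s a) - (\<Sum>a\<in>UNIV. \<pi> s a * \<Delta> s a)\<bar>
      \<le> 2 * dTV (\<pi>' s) (\<pi> s) * (2 * em * dm)" for s
    by (rule centered_expectation_bounds[OF _ _ A_le \<Delta>_A_le]; fact)+
  have "J \<gamma> f P \<mu> \<pi>' - J \<gamma> f P \<mu> \<pi> - Lsur \<gamma> f Pm \<mu> \<pi> \<pi>' / (1 - \<gamma>)
      = disc_sum \<gamma> (policy_kernel \<pi>' P) \<mu> (\<lambda>s. \<Sum>a\<in>UNIV. \<pi>' s a * \<Delta> s a)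
        - disc_sum \<gamma> (policy_kernel \<pi> P) \<mu> (\<lambda>s. \<Sum>a\<in>UNIV. \<pi> s a * \<Delta> s a)
        - disc_sum \<gamma> (policy_kernel \<pi> Pm) \<mu> (\<lambda>s. \<Sum>a\<in>UNIV. \<pi>' s a * A s a)"
    unfolding J_diff_sub_Lsur_eq[OF assms(1-4,6,7)] \<Delta>_def A_def ..
  also have "\<bar>\<dots>\<bar> \<le> 4 * dm * eps_total \<gamma> ep em / (1 - \<gamma>)"
  proof (rule abs_disc_sum_perturbation_le)
    show "(\<Sum>s'\<in>UNIV. \<bar>policy_kernel \<pi>' P s s' - policy_kernel \<pi> Pm s s'\<bar>) \<le> 2 * (ep + em)" for s
      using sum_abs_policy_kernel_diff_le[where \<rho> = \<pi>' and s = s and Q = Pm and e = "eps_m P Pm", OF assms(3,6) eps_m_ge] eps_pi_ge[of \<pi>' s \<pi>]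
      unfolding ep_def em_def by simp
    show "(\<Sum>s'\<in>UNIV. \<bar>policy_kernel \<pi>' P s s' - policy_kernel \<pi> P s s'\<bar>) \<le> 2 * ep" for s
      using sum_abs_policy_kernel_diff_le[where \<rho> = \<pi>' and s = s and Q = P and e = 0, OF assms(3,6)] eps_pi_ge[of \<pi>' s \<pi>]
      unfolding ep_def by (simp add: dTV_def)
    have "2 * dTV (\<pi>' s) (\<pi> s) * c \<le> 2 * ep * c" if "0 \<le> c" for s c
      using eps_pi_ge[of \<pi>' s \<pi>] that unfolding ep_def by (simp add: mult_right_mono)
    then show "\<bar>\<Sum>a\<in>UNIV. \<pi>' s a * A s a\<bar> \<le> 2 * ep * dm"
      and "\<bar>(\<Sum>a\<in>UNIV. \<pi>' s a * \<Delta> s a) - (\<Sum>a\<in>UNIV. \<pi>' s a * A s a) - (\<Sum>a\<in>UNIV. \<pi> s a * \<Delta> s a)\<bar>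
        \<le> 2 * ep * (2 * em * dm)" for s
      using bounds(1,3)[of s] delta_max_nonneg eps_m_nonneg unfolding dm_def em_def
      by (meson order.trans mult_nonneg_nonneg zero_le_numeral)+
    show "\<bar>\<Sum>a\<in>UNIV. \<pi> s a * \<Delta> s a\<bar> \<le> 2 * em * dm" for s
      by (rule bounds(2))
  qed (use assms is_stochastic_policy_kernel in auto)
  finally show ?thesis unfolding ep_def em_def dm_def .
qed

theorem mainTheorem1:
  fixes \<gamma> :: real
    and r :: "'s::finite \<Rightarrow> 'a::finite \<Rightarrow> 's \<Rightarrow> real"
    and C :: "('s \<Rightarrow> 'a \<Rightarrow> 's \<Rightarrow> real) set"
    and P Pm :: "'s \<Rightarrow> 'a \<Rightarrow> 's \<Rightarrow> real"
    and \<mu> :: "'s \<Rightarrow> real"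
    and D :: "('s \<Rightarrow> 'a \<Rightarrow> 's \<Rightarrow> real) \<Rightarrow> real"
    and \<pi> \<pi>' :: "'s \<Rightarrow> 'a \<Rightarrow> real"
  assumes "0 \<le> \<gamma>" and "\<gamma> < 1"
    and "is_kernel P" and "is_kernel Pm" and "is_dist \<mu>"
    and "is_policy \<pi>" and "is_policy \<pi>'"
  shows "\<forall>f \<in> insert r C.
      let eps = eps_total \<gamma> (eps_pi \<pi> \<pi>') (eps_m P Pm);
          L = Lsur \<gamma> f Pm \<mu> \<pi> \<pi>';
          dm = delta_max \<gamma> f Pm \<pi>;
          dJ = J \<gamma> f P \<mu> \<pi>' - J \<gamma> f P \<mu> \<pi>
      in L / (1 - \<gamma>) - 4 * dm * eps / (1 - \<gamma>) \<le> dJ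
       \<and> dJ \<le> L / (1 - \<gamma>) + 4 * dm * eps / (1 - \<gamma>)"
proof
  fix f
  have "\<bar>(J \<gamma> f P \<mu> \<pi>' - J \<gamma> f P \<mu> \<pi>) - Lsur \<gamma> f Pm \<mu> \<pi> \<pi>' / (1 - \<gamma>)\<bar>
      \<le> 4 * delta_max \<gamma> f Pm \<pi> * eps_total \<gamma> (eps_pi \<pi> \<pi>') (eps_m P Pm) / (1 - \<gamma>)"
    by (rule abs_J_diff_sub_Lsur_le[OF assms])
  then show "let eps = eps_total \<gamma> (eps_pi \<pi> \<pi>') (eps_m P Pm);
          L = Lsur \<gamma> f Pm \<mu> \<pi> \<pi>';
          dm = delta_max \<gamma> f Pm \<pi>;
          dJ = J \<gamma> f P \<mu> \<pi>' - J \<gamma> f P \<mu> \<pi>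
      in L / (1 - \<gamma>) - 4 * dm * eps / (1 - \<gamma>) \<le> dJ
       \<and> dJ \<le> L / (1 - \<gamma>) + 4 * dm * eps / (1 - \<gamma>)"
    unfolding Let_def abs_diff_le_iff .
qed

end
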